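(* Let $A$ be the $N\times N$ discretization matrix described below, partitioned as $A = \begin{bmatrix} A_{LL} & A_{LI} \\ A_{IL} & A_{II}\end{bmatrix}$. Then \[ \left(A_{IL}A_{LL}^{-1}A_{LI}\right)_{1,1} \leq |a^{}_{N_L+1,N_L}| = \left(A_{IL}\right)_{1,N_L}. \]
   Context: Consider $-\varepsilon u'' - c(x)u' + r(x)u = f$ on $(0,1)$, $u(0)=u(1)=0$, with $0<\underline{C}\le c(x)\le\overline{C}$ and $r(x)\ge 0$. On a mesh $0=x_0<x_1<\dots<x_N=1$ with $h_i = x_i - x_{i-1}$, $\bar h_i = (h_i+h_{i+1})/2$, $c_i=c(x_i)$, $r_i=r(x_i)$, $A=(a_{i,j})$ is the tridiagonal upwind finite-difference matrix whose row $i$ has stencil $\left[ -\frac{\varepsilon}{h_i\bar h_i} , \frac{\varepsilon}{\bar h_i}\left(\frac{1}{h_i} + \frac{1}{h_{i+1}}\right) + \frac{c_i}{h_{i+1}} + r_i , -\frac{\varepsilon}{h_{i+1}\bar h_i} -\frac{c_i}{h_{i+1}} \right]$. The unknowns are split into a layer set $L$ (first $N_L$ indices, meshwidths $\mathcal{O}(\varepsilon/N)$, including the transition point) and an interior set $I$ (remaining $N_I$ indices), $N=N_L+N_I$, giving the $2\times2$ block partition above; $A_{IL}$ and $A_{LI}$ each have a single nonzero entry, $(A_{IL})_{1,N_L}=a_{N_L+1,N_L}$ and $(A_{LI})_{N_L,1}=a_{N_L,N_L+1}$. *)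

theory Defs
  imports "Jordan_Normal_Form.Matrix"
begin

definition mesh_h :: "(nat \<Rightarrow> real) \<Rightarrow> nat \<Rightarrow> real" where
  "mesh_h x i = x i - x (i - 1)"

definition mesh_hbar :: "(nat \<Rightarrow> real) \<Rightarrow> nat \<Rightarrow> real" where
  "mesh_hbar x i = (mesh_h x i + mesh_h x (i + 1)) / 2"

text \<open>Entry a_{i,j} (1-based, i,j = index of the interior mesh node) of the
  upwind finite-difference matrix.\<close>
definition upwind_entry ::
  "real \<Rightarrow> (real \<Rightarrow> real) \<Rightarrow> (real \<Rightarrow> real) \<Rightarrow> (nat \<Rightarrow> real) \<Rightarrow> nat \<Rightarrow> nat \<Rightarrow> real" where
  "upwind_entry eps c r x i j =
     (if j + 1 = i then - eps / (mesh_h x i * mesh_hbar x i)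
      else if j = i then eps / mesh_hbar x i * (1 / mesh_h x i + 1 / mesh_h x (i + 1))
                         + c (x i) / mesh_h x (i + 1) + r (x i)
      else if j = i + 1 then - eps / (mesh_h x (i + 1) * mesh_hbar x i) - c (x i) / mesh_h x (i + 1)
      else 0)"

text \<open>The N x N matrix A (JNF matrices are 0-based: entry (i,j) is a_{i+1,j+1}).\<close>
definition upwind_mat ::
  "real \<Rightarrow> (real \<Rightarrow> real) \<Rightarrow> (real \<Rightarrow> real) \<Rightarrow> (nat \<Rightarrow> real) \<Rightarrow> nat \<Rightarrow> real mat" where
  "upwind_mat eps c r x N = mat N N (\<lambda>(i, j). upwind_entry eps c r x (i + 1) (j + 1))"

end

theory Submission
  imports Defs "Jordan_Normal_Form.Determinant"
begin

text \<open>The block \<open>A_LL\<close> is tridiagonal with negative off-diagonal entries \<open>-l\<^sub>k\<close>, \<open>-u\<^sub>k\<close>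
  and diagonal \<open>d\<^sub>k \<ge> l\<^sub>k + u\<^sub>k\<close>, where the coupling \<open>l\<^sub>0 > 0\<close> to the boundary makes the first
  row strictly dominant. Hence the pivots of Gaussian elimination, \<open>p\<^sub>0 = d\<^sub>0\<close> and
  \<open>p\<^sub>k\<^sub>+\<^sub>1 = d\<^sub>k\<^sub>+\<^sub>1 - l\<^sub>k\<^sub>+\<^sub>1 u\<^sub>k / p\<^sub>k\<close>, satisfy \<open>p\<^sub>k > u\<^sub>k > 0\<close>: the block is invertible
  and the last diagonal entry of its inverse is \<open>1 / p\<^sub>N\<^sub>L\<^sub>-\<^sub>1\<close>. As \<open>A_IL\<close> and \<open>A_LI\<close> have
  a single nonzero entry each, the Schur complement correction is
  \<open>l\<^sub>N\<^sub>L u\<^sub>N\<^sub>L\<^sub>-\<^sub>1 / p\<^sub>N\<^sub>L\<^sub>-\<^sub>1 < l\<^sub>N\<^sub>L = |a\<^sub>N\<^sub>L\<^sub>+\<^sub>1\<^sub>,\<^sub>N\<^sub>L|\<close>.\<close>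

lemma inverts_mat_carrier:
  assumes A: "A \<in> carrier_mat n n" and "inverts_mat A B" "inverts_mat B A"
  shows "B \<in> carrier_mat n n"
proof
  have "dim_col B = dim_col (A * B)"
    by simp
  also have "\<dots> = n"
    using assms(2) A unfolding inverts_mat_def by simp
  finally show "dim_col B = n" .
  have "dim_row B = dim_col (B * A)"
    using assms(3) unfolding inverts_mat_def by simp
  also have "\<dots> = n"
    using A by simp
  finally show "dim_row B = n" .
qed

text \<open>The values \<open>l 0\<close> and
  \<open>u (n - 1)\<close> are not entries of the matrix; in the hypotheses below they play the role
  of the couplings to the boundary or to the neighbouring block.\<close>
definition tridiag_mat :: "nat \<Rightarrow> (nat \<Rightarrow> 'a::comm_ring_1) \<Rightarrow> (nat \<Rightarrow> 'a) \<Rightarrow> (nat \<Rightarrow> 'a) \<Rightarrow> 'a mat"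
  where "tridiag_mat n l d u = mat n n (\<lambda>(i, j).
    if j + 1 = i then - l i else if j = i then d i else if j = i + 1 then - u i else 0)"

lemma tridiag_mat_carrier [simp]: "tridiag_mat n l d u \<in> carrier_mat n n"
  by (simp add: tridiag_mat_def)

lemma dim_tridiag_mat [simp]:
  "dim_row (tridiag_mat n l d u) = n" "dim_col (tridiag_mat n l d u) = n"
  by (simp_all add: tridiag_mat_def)

lemma tridiag_mult_vec_index:
  assumes y: "y \<in> carrier_vec n" and i: "i < n"
  shows "(tridiag_mat n l d u *\<^sub>v y) $ i =
    (if 0 < i then - l i * y $ (i - 1) else 0) + d i * y $ i
    + (if i + 1 < n then - u i * y $ (i + 1) else 0)"
proof -
  have "(tridiag_mat n l d u *\<^sub>v y) $ i = (\<Sum>j<n.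
      (if j + 1 = i then - l i * y $ j else 0) + (if j = i then d i * y $ j else 0)
      + (if j = i + 1 then - u i * y $ j else 0))"
    using y i by (auto simp: tridiag_mat_def scalar_prod_def atLeast0LessThan intro!: sum.cong)
  also have "\<dots> = (if 0 < i then - l i * y $ (i - 1) else 0) + d i * y $ i
      + (if i + 1 < n then - u i * y $ (i + 1) else 0)"
    using i by (cases i) (simp_all add: sum.distrib)
  finally show ?thesis .
qed

text \<open>The pivots of Gaussian elimination without row exchanges, i.e. the diagonal of
  \<open>U\<close> in the factorisation \<open>T = L U\<close>.\<close>
fun tridiag_pivot :: "(nat \<Rightarrow> 'a::field) \<Rightarrow> (nat \<Rightarrow> 'a) \<Rightarrow> (nat \<Rightarrow> 'a) \<Rightarrow> nat \<Rightarrow> 'a" where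
  "tridiag_pivot l d u 0 = d 0"
| "tridiag_pivot l d u (Suc k) = d (Suc k) - l (Suc k) * u k / tridiag_pivot l d u k"

lemma tridiag_pivot_gt_upper:
  fixes l d u :: "nat \<Rightarrow> 'a::linordered_field"
  assumes "\<And>k. k \<le> i \<Longrightarrow> 0 < l k" "\<And>k. k \<le> i \<Longrightarrow> 0 < u k"
    "\<And>k. k \<le> i \<Longrightarrow> l k + u k \<le> d k"
  shows "u i < tridiag_pivot l d u i"
  using assms
proof (induction i)
  case 0
  then show ?case by force
next
  case (Suc k)
  have "u k < tridiag_pivot l d u k" and "0 < u k"
    using Suc by auto
  then have "u k / tridiag_pivot l d u k < 1"
    by simp
  then have "l (Suc k) * u k / tridiag_pivot l d u k < l (Suc k)"
    using mult_strict_left_mono[of _ 1 "l (Suc k)"] Suc.prems(1)[of "Suc k"] by fastforce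
  then show ?case
    using Suc.prems(3)[of "Suc k"] by simp
qed

lemma tridiag_pivot_pos:
  fixes l d u :: "nat \<Rightarrow> 'a::linordered_field"
  assumes "\<And>k. k \<le> i \<Longrightarrow> 0 < l k" "\<And>k. k \<le> i \<Longrightarrow> 0 < u k" "\<And>k. k \<le> i \<Longrightarrow> l k + u k \<le> d k"
  shows "0 < tridiag_pivot l d u i"
proof -
  have "u i < tridiag_pivot l d u i"
    by (rule tridiag_pivot_gt_upper) (use assms in auto)
  then show ?thesis
    using assms(2)[of i] by simp
qed

lemma tridiag_mult_vec_eliminated:
  fixes l d u :: "nat \<Rightarrow> 'a::field"
  assumes y: "y \<in> carrier_vec n" and i: "i < n"
    and pivots: "\<And>k. k < i \<Longrightarrow> tridiag_pivot l d u k \<noteq> 0"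
    and rows_zero: "\<And>k. k < i \<Longrightarrow> (tridiag_mat n l d u *\<^sub>v y) $ k = 0"
  shows "(tridiag_mat n l d u *\<^sub>v y) $ i =
    tridiag_pivot l d u i * y $ i + (if i + 1 < n then - u i * y $ (i + 1) else 0)"
  using i pivots rows_zero
proof (induction i)
  case 0
  then show ?case
    using tridiag_mult_vec_index[OF y] by simp
next
  case (Suc k)
  have "0 = tridiag_pivot l d u k * y $ k - u k * y $ Suc k"
    using Suc by simp
  then have "y $ k = u k * y $ Suc k / tridiag_pivot l d u k"
    using Suc.prems(2)[of k] by (simp add: field_simps)
  then show ?case
    using tridiag_mult_vec_index[OF y Suc.prems(1)] by (simp add: algebra_simps)
qed

lemma tridiag_det_nonzero:
  fixes l d u :: "nat \<Rightarrow> 'a::field"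
  assumes pivots: "\<And>k. k < n \<Longrightarrow> tridiag_pivot l d u k \<noteq> 0"
  shows "det (tridiag_mat n l d u) \<noteq> 0"
proof
  assume "det (tridiag_mat n l d u) = 0"
  then obtain v where v: "v \<in> carrier_vec n" "v \<noteq> 0\<^sub>v n" "tridiag_mat n l d u *\<^sub>v v = 0\<^sub>v n"
    using det_0_iff_vec_prod_zero_field[OF tridiag_mat_carrier[of n l d u]] by auto
  have zero: "(tridiag_mat n l d u *\<^sub>v v) $ k = 0" if "k < n" for k
    using v(3) that by simp
  have row: "tridiag_pivot l d u k * v $ k + (if k + 1 < n then - u k * v $ (k + 1) else 0) = 0"
    if "k < n" for k
  proof -
    have "(tridiag_mat n l d u *\<^sub>v v) $ k =
        tridiag_pivot l d u k * v $ k + (if k + 1 < n then - u k * v $ (k + 1) else 0)"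
      by (rule tridiag_mult_vec_eliminated[OF v(1) that]) (use that pivots zero in auto)
    then show ?thesis
      using zero[OF that] by simp
  qed
  have "v $ k = 0" if "k < n" for k
  proof -
    have "k \<le> n - 1"
      using that by simp
    then show ?thesis
    proof (induction k rule: inc_induct)
      case base
      show ?case using row[of "n - 1"] pivots[of "n - 1"] that by simp
    next
      case (step k)
      then have "Suc k < n"
        by simp
      then show ?case
        using row[of k] pivots[of k] step.IH by simp
    qed
  qed
  then show False
    using v(1,2) by (auto intro: eq_vecI)
qed

lemma tridiag_invertible:
  fixes l d u :: "nat \<Rightarrow> 'a::field"
  assumes "\<And>k. k < n \<Longrightarrow> tridiag_pivot l d u k \<noteq> 0"
  shows "invertible_mat (tridiag_mat n l d u)"
proof -
  obtain B where "B \<in> carrier_mat n n" "tridiag_mat n l d u * B = 1\<^sub>m n" "B * tridiag_mat n l d u = 1\<^sub>m n"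
    using det_non_zero_imp_unit[OF tridiag_mat_carrier[of n l d u] tridiag_det_nonzero[OF assms], of "()"]
    unfolding Units_def ring_mat_def by auto
  then show ?thesis
    unfolding invertible_mat_def inverts_mat_def by auto
qed

lemma tridiag_inverse_last_diag:
  fixes l d u :: "nat \<Rightarrow> 'a::field"
  assumes pivots: "\<And>k. k < n \<Longrightarrow> tridiag_pivot l d u k \<noteq> 0" and n: "0 < n"
    and B: "B \<in> carrier_mat n n" and inverse: "tridiag_mat n l d u * B = 1\<^sub>m n"
  shows "B $$ (n - 1, n - 1) = 1 / tridiag_pivot l d u (n - 1)"
proof -
  define y where "y = col B (n - 1)"
  have y: "y \<in> carrier_vec n"
    using B by (simp add: y_def carrier_vecI)
  have "tridiag_mat n l d u *\<^sub>v y = col (1\<^sub>m n) (n - 1)"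
    using col_mult2[OF tridiag_mat_carrier[of n l d u] B, of "n - 1"] n by (simp add: y_def inverse)
  then have unit: "(tridiag_mat n l d u *\<^sub>v y) $ k = (if k = n - 1 then 1 else 0)" if "k < n" for k
    using that n by simp
  have "(tridiag_mat n l d u *\<^sub>v y) $ (n - 1) = tridiag_pivot l d u (n - 1) * y $ (n - 1)"
    by (rule tridiag_mult_vec_eliminated[OF y, THEN trans]) (use n pivots unit in auto)
  then have "tridiag_pivot l d u (n - 1) * y $ (n - 1) = 1"
    using unit[of "n - 1"] n by simp
  then show ?thesis
    using B n pivots[of "n - 1"] by (simp add: y_def divide_simps mult.commute)
qed

lemma split_block_tridiag_mat:
  "split_block (tridiag_mat (m + n) l d u) m m =
    (tridiag_mat m l d u,
     mat m n (\<lambda>(i, j). if i = m - 1 \<and> j = 0 then - u (m - 1) else 0),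
     mat n m (\<lambda>(i, j). if i = 0 \<and> j = m - 1 then - l m else 0),
     tridiag_mat n (\<lambda>k. l (k + m)) (\<lambda>k. d (k + m)) (\<lambda>k. u (k + m)))"
  by (auto simp: split_block_def tridiag_mat_def Let_def intro!: eq_matI)

lemma split_block_tridiag_mat_corner:
  assumes "split_block (tridiag_mat (m + n) l d u) m m = (A_LL, A_LI, A_IL, A_II)"
    and "0 < m" "0 < n"
  shows "A_IL $$ (0, m - 1) = - l m"
  using assms(1)[unfolded split_block_tridiag_mat, symmetric] assms(2,3) by simp

lemma mult_corner_couplings:
  assumes B: "B \<in> carrier_mat m m" and "0 < m" "0 < n" "0 < n'"
  shows "(mat n m (\<lambda>(i, j). if i = 0 \<and> j = m - 1 then a else 0) * B
      * mat m n' (\<lambda>(i, j). if i = m - 1 \<and> j = 0 then b else 0)) $$ (0, 0)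
    = a * B $$ (m - 1, m - 1) * b"
proof -
  let ?X = "mat n m (\<lambda>(i, j). if i = 0 \<and> j = m - 1 then a else 0)"
  let ?Y = "mat m n' (\<lambda>(i, j). if i = m - 1 \<and> j = 0 then b else 0)"
  have sum_single: "(\<Sum>j<m. (if j = m - 1 then f j else 0)) = f (m - 1)" for f :: "nat \<Rightarrow> 'a"
    using \<open>0 < m\<close> by (simp add: sum.delta')
  have "(?X * B) $$ (0, m - 1) = (\<Sum>j<m. ?X $$ (0, j) * B $$ (j, m - 1))"
    using B assms(2,3) by (simp add: scalar_prod_def atLeast0LessThan)
  also have "\<dots> = (\<Sum>j<m. (if j = m - 1 then a * B $$ (j, m - 1) else 0))"
    using assms(3) by (intro sum.cong) auto
  finally have XB: "(?X * B) $$ (0, m - 1) = a * B $$ (m - 1, m - 1)"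
    by (simp only: sum_single)
  have "(?X * B * ?Y) $$ (0, 0) = (\<Sum>j<m. (?X * B) $$ (0, j) * ?Y $$ (j, 0))"
    using B assms(2-4) by (simp add: scalar_prod_def atLeast0LessThan)
  also have "\<dots> = (\<Sum>j<m. (if j = m - 1 then (?X * B) $$ (0, j) * b else 0))"
    using assms(4) by (intro sum.cong) auto
  also have "\<dots> = a * B $$ (m - 1, m - 1) * b"
    by (simp only: sum_single XB)
  finally show ?thesis .
qed

lemma tridiag_block_invertible:
  fixes l d u :: "nat \<Rightarrow> 'a::linordered_field"
  assumes "\<And>k. k < m \<Longrightarrow> 0 < l k" "\<And>k. k < m \<Longrightarrow> 0 < u k"
    "\<And>k. k < m \<Longrightarrow> l k + u k \<le> d k"
    and blocks: "split_block (tridiag_mat (m + n) l d u) m m = (A_LL, A_LI, A_IL, A_II)"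
  shows "invertible_mat A_LL"
proof -
  have "A_LL = tridiag_mat m l d u"
    using blocks by (simp add: split_block_tridiag_mat)
  also have "invertible_mat \<dots>"
  proof (rule tridiag_invertible)
    show "tridiag_pivot l d u k \<noteq> 0" if "k < m" for k
      using tridiag_pivot_pos[of k l u d] that assms by fastforce
  qed
  finally show ?thesis .
qed

lemma tridiag_schur_corner_le:
  fixes l d u :: "nat \<Rightarrow> 'a::linordered_field"
  assumes l_pos: "\<And>k. k \<le> m \<Longrightarrow> 0 < l k" and u_pos: "\<And>k. k < m \<Longrightarrow> 0 < u k"
    and dominant: "\<And>k. k < m \<Longrightarrow> l k + u k \<le> d k"
    and m: "0 < m" and n: "0 < n"
    and blocks: "split_block (tridiag_mat (m + n) l d u) m m = (A_LL, A_LI, A_IL, A_II)"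
    and inverse: "inverts_mat A_LL B" "inverts_mat B A_LL"
  shows "(A_IL * B * A_LI) $$ (0, 0) \<le> l m"
proof -
  let ?p = "tridiag_pivot l d u"
  note blocks = blocks[unfolded split_block_tridiag_mat, symmetric]
  have B: "B \<in> carrier_mat m m"
    using inverts_mat_carrier[OF _ inverse] blocks by simp
  have pivots: "0 < ?p k" if "k < m" for k
    by (rule tridiag_pivot_pos) (use that l_pos u_pos dominant in auto)
  have "u (m - 1) < ?p (m - 1)"
    by (rule tridiag_pivot_gt_upper) (use m l_pos u_pos dominant in auto)
  then have ratio: "u (m - 1) / ?p (m - 1) \<le> 1"
    using pivots[of "m - 1"] m by simp
  have "B $$ (m - 1, m - 1) = 1 / ?p (m - 1)"
    using blocks pivots[THEN less_imp_neq, symmetric] m B inverse(1)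
    by (intro tridiag_inverse_last_diag) (auto simp: inverts_mat_def)
  then have "(A_IL * B * A_LI) $$ (0, 0) = l m * (u (m - 1) / ?p (m - 1))"
    using blocks mult_corner_couplings[OF B m n n] by simp
  also have "\<dots> \<le> l m"
    using mult_left_le[OF ratio] l_pos[of m] by simp
  finally show ?thesis .
qed

text \<open>Index \<open>k\<close> of the tridiagonal data refers to row \<open>k + 1\<close> of the paper's 1-based matrix.\<close>
definition upwind_lower :: "real \<Rightarrow> (nat \<Rightarrow> real) \<Rightarrow> nat \<Rightarrow> real" where
  "upwind_lower eps x k = eps / (mesh_h x (k + 1) * mesh_hbar x (k + 1))"

definition upwind_upper :: "real \<Rightarrow> (real \<Rightarrow> real) \<Rightarrow> (nat \<Rightarrow> real) \<Rightarrow> nat \<Rightarrow> real" where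
  "upwind_upper eps c x k =
    eps / (mesh_h x (k + 2) * mesh_hbar x (k + 1)) + c (x (k + 1)) / mesh_h x (k + 2)"

lemma upwind_mat_eq_tridiag_mat:
  "upwind_mat eps c r x N = tridiag_mat N (upwind_lower eps x)
     (\<lambda>k. upwind_entry eps c r x (k + 1) (k + 1)) (upwind_upper eps c x)"
  by (auto simp: upwind_mat_def tridiag_mat_def upwind_entry_def upwind_lower_def
      upwind_upper_def intro!: eq_matI)

lemma upwind_diag_eq:
  "upwind_entry eps c r x (k + 1) (k + 1) =
    upwind_lower eps x k + upwind_upper eps c x k + r (x (k + 1))"
  by (simp add: upwind_entry_def upwind_lower_def upwind_upper_def divide_inverse
      inverse_mult_distrib algebra_simps)

lemma upwind_entry_sub:
  "upwind_entry eps c r x (k + 1) k = - upwind_lower eps x k"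
  by (simp add: upwind_entry_def upwind_lower_def)

lemma upwind_coefficients:
  assumes eps: "0 < eps" and h: "0 < mesh_h x (k + 1)" "0 < mesh_h x (k + 2)"
    and c: "0 < c (x (k + 1))" and r: "0 \<le> r (x (k + 1))"
  shows "0 < upwind_lower eps x k" "0 < upwind_upper eps c x k"
    "upwind_lower eps x k + upwind_upper eps c x k \<le> upwind_entry eps c r x (k + 1) (k + 1)"
proof -
  have "0 < mesh_hbar x (k + 1)"
    using h by (simp add: mesh_hbar_def)
  then show "0 < upwind_lower eps x k" "0 < upwind_upper eps c x k"
    unfolding upwind_lower_def upwind_upper_def
    using eps h c by (auto intro!: add_pos_pos divide_pos_pos)
  show "upwind_lower eps x k + upwind_upper eps c x k \<le> upwind_entry eps c r x (k + 1) (k + 1)"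
    unfolding upwind_diag_eq using r by simp
qed

lemma mesh_mono:
  fixes x :: "nat \<Rightarrow> real"
  assumes "\<And>i. i < M \<Longrightarrow> x i < x (Suc i)" and "i \<le> j" "j \<le> M"
  shows "x i \<le> x j"
  using assms(2,3)
proof (induction j rule: dec_induct)
  case (step j)
  then show ?case
    using assms(1)[of j] by simp
qed simp

lemma mesh_nodes_in_unit_interval:
  fixes x :: "nat \<Rightarrow> real"
  assumes "\<And>i. i < M \<Longrightarrow> x i < x (Suc i)" "x 0 = 0" "x M = 1" "i \<le> M"
  shows "0 \<le> x i \<and> x i \<le> 1"
  using mesh_mono[where x = x and M = M, OF assms(1)] assms(2-4) by fastforce

lemma upwind_coefficients_on_mesh:
  fixes x :: "nat \<Rightarrow> real"
  assumes eps: "0 < eps" and Cl: "0 < Cl"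
    and c_lower: "\<And>t. 0 \<le> t \<Longrightarrow> t \<le> 1 \<Longrightarrow> Cl \<le> c t"
    and r_nonneg: "\<And>t. 0 \<le> t \<Longrightarrow> t \<le> 1 \<Longrightarrow> 0 \<le> r t"
    and x0: "x 0 = 0" and x1: "x (N + 1) = 1" and mesh: "\<And>i. i < N + 1 \<Longrightarrow> x i < x (Suc i)"
    and k: "k < N"
  shows "0 < upwind_lower eps x k \<and> 0 < upwind_upper eps c x k \<and>
    upwind_lower eps x k + upwind_upper eps c x k \<le> upwind_entry eps c r x (k + 1) (k + 1)"
proof -
  have "0 \<le> x (k + 1) \<and> x (k + 1) \<le> 1"
    using mesh_nodes_in_unit_interval[where x = x and M = "N + 1", OF mesh] x0 x1 k by simp
  moreover have "0 < mesh_h x (k + 1)" "0 < mesh_h x (k + 2)"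
    using mesh[of k] mesh[of "k + 1"] k by (simp_all add: mesh_h_def)
  ultimately show ?thesis
    using upwind_coefficients[OF eps] c_lower[of "x (k + 1)"] r_nonneg[of "x (k + 1)"] Cl
    by force
qed

theorem corollary2p4:
  fixes eps Cl Cu :: real and c r :: "real \<Rightarrow> real" and x :: "nat \<Rightarrow> real"
    and NL NI :: nat and A_LL A_LI A_IL A_II :: "real mat"
  assumes eps: "eps > 0"
    and Cl: "0 < Cl"
    and c_bounds: "\<And>t. 0 \<le> t \<Longrightarrow> t \<le> 1 \<Longrightarrow> Cl \<le> c t \<and> c t \<le> Cu"
    and r_nonneg: "\<And>t. 0 \<le> t \<Longrightarrow> t \<le> 1 \<Longrightarrow> r t \<ge> 0"
    and NL: "NL \<ge> 1" and NI: "NI \<ge> 1"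
    and x0: "x 0 = 0" and x1: "x (NL + NI + 1) = 1"
    and mesh: "\<And>i. i \<le> NL + NI \<Longrightarrow> x i < x (i + 1)"
    and blocks: "split_block (upwind_mat eps c r x (NL + NI)) NL NL = (A_LL, A_LI, A_IL, A_II)"
  shows "invertible_mat A_LL \<and>
    (\<forall>B. inverts_mat A_LL B \<and> inverts_mat B A_LL \<longrightarrow>
       (A_IL * B * A_LI) $$ (0, 0) \<le> \<bar>upwind_entry eps c r x (NL + 1) NL\<bar>
     \<and> \<bar>upwind_entry eps c r x (NL + 1) NL\<bar> = \<bar>A_IL $$ (0, NL - 1)\<bar>)"
proof -
  let ?l = "upwind_lower eps x" and ?u = "upwind_upper eps c x"
    and ?d = "\<lambda>k. upwind_entry eps c r x (k + 1) (k + 1)"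
  have "0 < ?l k \<and> 0 < ?u k \<and> ?l k + ?u k \<le> ?d k" if "k < NL + NI" for k
    by (rule upwind_coefficients_on_mesh[where N = "NL + NI" and Cl = Cl])
      (use eps Cl c_bounds r_nonneg x0 x1 mesh that in auto)
  then have l_pos: "\<And>k. k \<le> NL \<Longrightarrow> 0 < ?l k" and u_pos: "\<And>k. k < NL \<Longrightarrow> 0 < ?u k"
    and dominant: "\<And>k. k < NL \<Longrightarrow> ?l k + ?u k \<le> ?d k"
    using NI by auto
  note blocks = blocks[unfolded upwind_mat_eq_tridiag_mat]
  have m: "0 < NL" and n: "0 < NI"
    using NL NI by simp_all
  have "invertible_mat A_LL"
    by (rule tridiag_block_invertible[OF _ u_pos dominant blocks]) (simp add: l_pos)
  then show ?thesis
    using tridiag_schur_corner_le[OF l_pos u_pos dominant m n blocks]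
      split_block_tridiag_mat_corner[OF blocks m n] upwind_entry_sub[of eps c r x NL] l_pos[of NL]
    by simp
qed



end
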